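(* Let $\theta_1,\theta_2\in\mathbb{R}$ satisfy $\sin(\theta_1)\sin(\theta_2)>0$. Then the two-player two-strategy game with payoffs \[ G_1=\begin{bmatrix}\frac{1}{\sqrt2}\sin(\theta_1+\frac{\pi}{4})&\frac{1}{\sqrt2}\cos(\theta_1+\frac{\pi}{4})\\ -\frac{1}{\sqrt2}\sin(\theta_1+\frac{\pi}{4})&-\frac{1}{\sqrt2}\cos(\theta_1+\frac{\pi}{4})\end{bmatrix},\qquad G_2=\begin{bmatrix}\frac{1}{\sqrt2}\sin(\theta_2+\frac{\pi}{4})&-\frac{1}{\sqrt2}\sin(\theta_2+\frac{\pi}{4})\\ \frac{1}{\sqrt2}\cos(\theta_2+\frac{\pi}{4})&-\frac{1}{\sqrt2}\cos(\theta_2+\frac{\pi}{4})\end{bmatrix} \] (rows indexed by player 1's strategy $a_1\in\{A,B\}$, columns by player 2's strategy $a_2\in\{A,B\}$) is invariant-common-payoff.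
   Context: A two-player game $(G_1,G_2)$ is invariant-common-payoff if there exist scalars $s_1,s_2>0$ and functions $b_1$ (of $a_2$) and $b_2$ (of $a_1$) such that $\hat G_1(a)=s_1G_1(a)+b_1(a_2)$ and $\hat G_2(a)=s_2G_2(a)+b_2(a_1)$ satisfy $\hat G_1(a)=\hat G_2(a)$ for all joint strategies $a=(a_1,a_2)$. *)

theory Defs
  imports Complex_Main
begin

datatype strat = A | B

definition invariant_common_payoff ::
  "(strat \<times> strat \<Rightarrow> real) \<Rightarrow> (strat \<times> strat \<Rightarrow> real) \<Rightarrow> bool" where
  "invariant_common_payoff G1 G2 \<longleftrightarrow>
     (\<exists>s1 s2 :: real. \<exists>b1 b2 :: strat \<Rightarrow> real. s1 > 0 \<and> s2 > 0 \<and>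
        (\<forall>a1 a2. s1 * G1 (a1, a2) + b1 a2 = s2 * G2 (a1, a2) + b2 a1))"

definition game4_G1 :: "real \<Rightarrow> strat \<times> strat \<Rightarrow> real" where
  "game4_G1 th = (\<lambda>(a1, a2).
     (if a1 = A then 1 else -1) / sqrt 2 *
     (if a2 = A then sin (th + pi/4) else cos (th + pi/4)))"

definition game4_G2 :: "real \<Rightarrow> strat \<times> strat \<Rightarrow> real" where
  "game4_G2 th = (\<lambda>(a1, a2).
     (if a2 = A then 1 else -1) / sqrt 2 *
     (if a1 = A then sin (th + pi/4) else cos (th + pi/4)))"

end

theory Submission
  imports Defs
begin

text \<open>A 2x2 game is invariant-common-payoff exactly when some positive rescalings of the two
  payoffs have the same interaction term G(A,A) - G(A,B) - G(B,A) + G(B,B), the only part of a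
  payoff that adding b1 a2 and b2 a1 cannot change. Both payoffs of the game have interaction
  term 2 sin th, since (sin (th + pi/4) - cos (th + pi/4)) / sqrt 2 = sin th; so when sin th1
  and sin th2 have the same sign the scales |sin th2| and |sin th1| make them agree.\<close>

definition interaction :: "(strat \<times> strat \<Rightarrow> real) \<Rightarrow> real" where
  "interaction G = G (A, A) - G (A, B) - G (B, A) + G (B, B)"

lemma interaction_eq_0_iff_separable:
  "interaction M = 0 \<longleftrightarrow> (\<exists>b1 b2. \<forall>a1 a2. M (a1, a2) = b2 a1 - b1 a2)"
proof
  assume "interaction M = 0"
  then have split: "M (a1, a2) = M (a1, A) - (M (A, A) - M (A, a2))" for a1 a2
    by (cases a1; cases a2) (simp_all add: interaction_def)
  show "\<exists>b1 b2. \<forall>a1 a2. M (a1, a2) = b2 a1 - b1 a2"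
    by (intro exI[of _ "\<lambda>a2. M (A, A) - M (A, a2)"] exI[of _ "\<lambda>a1. M (a1, A)"] allI)
      (rule split)
next
  assume "\<exists>b1 b2. \<forall>a1 a2. M (a1, a2) = b2 a1 - b1 a2"
  then obtain b1 b2 where "\<And>a1 a2. M (a1, a2) = b2 a1 - b1 a2"
    by blast
  then show "interaction M = 0"
    by (simp add: interaction_def)
qed

lemma interaction_diff:
  "interaction (\<lambda>a. s1 * G1 a - s2 * G2 a) = s1 * interaction G1 - s2 * interaction G2"
  by (simp add: interaction_def algebra_simps)

lemma invariant_common_payoff_iff_interaction:
  "invariant_common_payoff G1 G2 \<longleftrightarrow>
     (\<exists>s1 s2. s1 > 0 \<and> s2 > 0 \<and> s1 * interaction G1 = s2 * interaction G2)"
proof -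
  have "(\<forall>a1 a2. s1 * G1 (a1, a2) + b1 a2 = s2 * G2 (a1, a2) + b2 a1) \<longleftrightarrow>
        (\<forall>a1 a2. s1 * G1 (a1, a2) - s2 * G2 (a1, a2) = b2 a1 - b1 a2)"
    for s1 s2 :: real and b1 b2 :: "strat \<Rightarrow> real"
    by (auto simp: algebra_simps)
  then have "invariant_common_payoff G1 G2 \<longleftrightarrow>
      (\<exists>s1 s2. s1 > 0 \<and> s2 > 0 \<and> interaction (\<lambda>a. s1 * G1 a - s2 * G2 a) = 0)"
    unfolding invariant_common_payoff_def interaction_eq_0_iff_separable by simp
  then show ?thesis
    by (simp add: interaction_diff)
qed

lemma sin_plus_pi_4_minus_cos_plus_pi_4:
  "(sin (t + pi/4) - cos (t + pi/4)) / sqrt 2 = sin t"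
proof -
  have "sin (t + pi/4) - cos (t + pi/4) = sqrt 2 * sin t"
    by (simp add: sin_add cos_add sin_45 cos_45 algebra_simps)
  then show ?thesis
    by simp
qed

lemma interaction_game4_G1: "interaction (game4_G1 th) = 2 * sin th"
proof -
  have "interaction (game4_G1 th) = 2 * ((sin (th + pi/4) - cos (th + pi/4)) / sqrt 2)"
    by (simp add: interaction_def game4_G1_def diff_divide_distrib)
  then show ?thesis
    by (simp only: sin_plus_pi_4_minus_cos_plus_pi_4)
qed

lemma interaction_game4_G2: "interaction (game4_G2 th) = 2 * sin th"
proof -
  have "interaction (game4_G2 th) = 2 * ((sin (th + pi/4) - cos (th + pi/4)) / sqrt 2)"
    by (simp add: interaction_def game4_G2_def diff_divide_distrib)
  then show ?thesis
    by (simp only: sin_plus_pi_4_minus_cos_plus_pi_4)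
qed

lemma abs_mult_commute_of_same_sign:
  fixes x y :: real
  assumes "x * y > 0"
  shows "\<bar>y\<bar> * x = \<bar>x\<bar> * y"
  using assms by (cases "x \<ge> 0"; cases "y \<ge> 0") (auto simp: zero_less_mult_iff)

theorem mainTheorem4:
  fixes th1 th2 :: real
  assumes "sin th1 * sin th2 > 0"
  shows "invariant_common_payoff (game4_G1 th1) (game4_G2 th2)"
proof -
  have "\<bar>sin th2\<bar> > 0" "\<bar>sin th1\<bar> > 0"
    using assms by auto
  moreover have "\<bar>sin th2\<bar> * interaction (game4_G1 th1) = \<bar>sin th1\<bar> * interaction (game4_G2 th2)"
    using abs_mult_commute_of_same_sign[OF assms]
    by (simp add: interaction_game4_G1 interaction_game4_G2)
  ultimately show ?thesis
    unfolding invariant_common_payoff_iff_interaction by blast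
qed

end
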